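(* Let $F\in\mathbb{R}^{n\times n}$, $G\in\mathbb{R}^{n\times m}$ and $H\in\mathbb{R}^{p\times n}$ with $m\le p$ and $m\le n$, such that $(F,G)$ is reachable, $(F,H)$ is observable, $F$ has all its eigenvalues in the open left half-plane, $G$ has full column rank $m$, and $\mathrm{rank}(HG)=m$. Let $V_{\zeta}(s)=H(sI-F)^{-1}G$. Let $\Pi$ be a $p\times p$ permutation matrix such that $\Pi H=\begin{pmatrix}H_0\\ H_1\end{pmatrix}$ with $H_0\in\mathbb{R}^{m\times n}$ and $H_0G$ invertible (such a $\Pi$ exists because $\mathrm{rank}(HG)=m$). Define $\Gamma=F-G(H_0G)^{-1}H_0F$, $$T(s)=H_1\Gamma(sI-\Gamma)^{-1}G(H_0G)^{-1}+H_1G(H_0G)^{-1},\qquad M(s)=H_0F(sI-F)^{-1}G+H_0G .$$ Then $$\Pi\, V_{\zeta}(s)=\begin{pmatrix} I\\ T(s)\end{pmatrix}M(s)\,s^{-1}.$$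
   Context: Here $V_\zeta$ is a minimal stable spectral factor of the spectral density $\Phi_\zeta(i\omega)=V_\zeta(i\omega)V_\zeta(-i\omega)'$ of a stationary $p$-vector process $\zeta$; reordering the rows of $H$ by $\Pi$ corresponds to reordering the entries of $\zeta$ so that the first $m$ entries form $u$ and the remaining $p-m$ form $y$, and $T$ is then the transfer function relating $u$ to $y$. *)

theory Defs
  imports "Jordan_Normal_Form.Char_Poly" "Jordan_Normal_Form.DL_Rank"
    "HOL-Combinatorics.Permutations"
begin

definition minv :: "'a :: field mat \<Rightarrow> 'a mat" where
  "minv A = (inverse (det A)) \<cdot>\<^sub>m adj_mat A"

abbreviation mrank :: "nat \<Rightarrow> 'a :: field mat \<Rightarrow> nat" where
  "mrank nr A \<equiv> vec_space.rank nr A"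

text \<open>Controllability (reachability) matrix [G, FG, ..., F^(n-1) G], of size n x (n*m).\<close>
definition ctrb_mat :: "nat \<Rightarrow> nat \<Rightarrow> 'a :: comm_ring_1 mat \<Rightarrow> 'a mat \<Rightarrow> 'a mat" where
  "ctrb_mat n m F G = mat n (n * m) (\<lambda>(i,j). (F ^\<^sub>m (j div m) * G) $$ (i, j mod m))"

text \<open>Observability matrix [H; HF; ...; H F^(n-1)], of size (n*p) x n.\<close>
definition obsv_mat :: "nat \<Rightarrow> nat \<Rightarrow> 'a :: comm_ring_1 mat \<Rightarrow> 'a mat \<Rightarrow> 'a mat" where
  "obsv_mat n p F H = mat (n * p) n (\<lambda>(i,j). (H * F ^\<^sub>m (i div p)) $$ (i mod p, j))"

definition reachable :: "nat \<Rightarrow> nat \<Rightarrow> real mat \<Rightarrow> real mat \<Rightarrow> bool" where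
  "reachable n m F G \<longleftrightarrow> mrank n (ctrb_mat n m F G) = n"

definition observable :: "nat \<Rightarrow> nat \<Rightarrow> real mat \<Rightarrow> real mat \<Rightarrow> bool" where
  "observable n p F H \<longleftrightarrow> mrank (n * p) (obsv_mat n p F H) = n"

definition hurwitz :: "real mat \<Rightarrow> bool" where
  "hurwitz F \<longleftrightarrow> (\<forall>z. eigenvalue (map_mat complex_of_real F) z \<longrightarrow> Re z < 0)"

text \<open>Permutation matrix: row i of P * A is row (\<sigma> i) of A.\<close>
definition perm_mat :: "nat \<Rightarrow> (nat \<Rightarrow> nat) \<Rightarrow> 'a :: zero_neq_one mat" where
  "perm_mat p \<sigma> = mat p p (\<lambda>(i,j). if \<sigma> i = j then 1 else 0)"

definition is_perm_mat :: "nat \<Rightarrow> 'a :: zero_neq_one mat \<Rightarrow> bool" where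
  "is_perm_mat p P \<longleftrightarrow> (\<exists>\<sigma>. \<sigma> permutes {..<p} \<and> P = perm_mat p \<sigma>)"

abbreviation cmat :: "real mat \<Rightarrow> complex mat" where
  "cmat A \<equiv> map_mat complex_of_real A"

end

theory Submission
  imports Defs
begin

text \<open>
  Put \<open>R = (sI - F)\<^sup>-\<^sup>1\<close>, \<open>Y = R G\<close> and \<open>K = G (H\<^sub>0G)\<^sup>-\<^sup>1 H\<^sub>0\<close>, so that \<open>K G = G\<close> and
  \<open>\<Gamma> = F - K F\<close>. The resolvent identity \<open>F R = s R - I\<close> turns \<open>M\<close> into \<open>s H\<^sub>0 Y\<close> and \<open>T\<close> into
  \<open>s H\<^sub>1 (sI - \<Gamma>)\<^sup>-\<^sup>1 G (H\<^sub>0G)\<^sup>-\<^sup>1\<close>. Writing \<open>sI - \<Gamma> = (sI - F) + K F\<close> gives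
  \<open>(sI - \<Gamma>) Y = s K Y\<close>, hence \<open>T M s\<^sup>-\<^sup>1 = H\<^sub>1 Y\<close>, while \<open>M s\<^sup>-\<^sup>1 = H\<^sub>0 Y\<close>; stacking the two
  rows gives \<open>\<Pi> H Y\<close>. The identity is purely algebraic.
\<close>

lemma minv_mat:
  fixes A :: "'a::field mat"
  assumes A: "A \<in> carrier_mat n n" and det: "det A \<noteq> 0"
  shows "minv A \<in> carrier_mat n n" "minv A * A = 1\<^sub>m n" "A * minv A = 1\<^sub>m n"
proof -
  show "minv A \<in> carrier_mat n n" unfolding minv_def using adj_mat(1)[OF A] by simp
  have "minv A * A = inverse (det A) \<cdot>\<^sub>m (adj_mat A * A)"
    unfolding minv_def by (rule mult_smult_assoc_mat[OF adj_mat(1)[OF A] A])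
  also have "\<dots> = 1\<^sub>m n" unfolding adj_mat(3)[OF A] using det by (intro eq_matI) auto
  finally show "minv A * A = 1\<^sub>m n" .
  have "A * minv A = inverse (det A) \<cdot>\<^sub>m (A * adj_mat A)"
    unfolding minv_def by (rule mult_smult_distrib[OF A adj_mat(1)[OF A]])
  also have "\<dots> = 1\<^sub>m n" unfolding adj_mat(2)[OF A] using det by (intro eq_matI) auto
  finally show "A * minv A = 1\<^sub>m n" .
qed

lemma invertible_mat_det_nonzero:
  fixes A :: "'a::comm_ring_1 mat"
  assumes A: "A \<in> carrier_mat n n" and "invertible_mat A"
  shows "det A \<noteq> 0"
proof -
  obtain B where AB: "A * B = 1\<^sub>m n" and BA: "B * A = 1\<^sub>m (dim_row B)"
    using assms unfolding invertible_mat_def inverts_mat_def by auto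
  have "dim_row B = n" using arg_cong[OF BA, of dim_col] A by simp
  moreover have "dim_col B = n" using arg_cong[OF AB, of dim_col] by simp
  ultimately have "B \<in> carrier_mat n n" by (rule carrier_matI)
  then have "det A * det B = 1" using det_mult[OF A] AB det_one by metis
  then show ?thesis by auto
qed

lemma append_rows_mult:
  fixes A :: "'a::semiring_1 mat"
  assumes A: "A \<in> carrier_mat n1 k" and B: "B \<in> carrier_mat n2 k" and C: "C \<in> carrier_mat k l"
  shows "(A @\<^sub>r B) * C = (A * C) @\<^sub>r (B * C)"
proof (rule eq_matI)
  fix i j assume i: "i < dim_row ((A * C) @\<^sub>r (B * C))" and j: "j < dim_col ((A * C) @\<^sub>r (B * C))"
  have "row (A @\<^sub>r B) i = (if i < n1 then row A i else row B (i - n1))"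
    using A B i C by (auto simp: append_rows_def intro!: eq_vecI)
  then show "((A @\<^sub>r B) * C) $$ (i, j) = ((A * C) @\<^sub>r (B * C)) $$ (i, j)"
    using A B C i j by (auto simp: append_rows_def)
qed (use A B C in \<open>auto simp: append_rows_def\<close>)

lemma smult_append_rows:
  fixes A :: "'a::semiring_1 mat"
  assumes "A \<in> carrier_mat n1 k" and "B \<in> carrier_mat n2 k"
  shows "a \<cdot>\<^sub>m (A @\<^sub>r B) = (a \<cdot>\<^sub>m A) @\<^sub>r (a \<cdot>\<^sub>m B)"
  using assms by (intro eq_matI) (auto simp: append_rows_def)

lemma map_mat_append_rows:
  assumes "A \<in> carrier_mat n1 k" and "B \<in> carrier_mat n2 k"
  shows "map_mat f (A @\<^sub>r B) = map_mat f A @\<^sub>r map_mat f B"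
  using assms by (intro eq_matI) (auto simp: append_rows_def)

lemma smult_inverse_cancel_mat:
  fixes A :: "'a::field mat"
  assumes "s \<noteq> 0"
  shows "inverse s \<cdot>\<^sub>m (s \<cdot>\<^sub>m A) = A" and "s \<cdot>\<^sub>m (inverse s \<cdot>\<^sub>m A) = A"
  using assms by (auto intro: eq_matI)

lemma minus_add_cancel_mat:
  fixes M :: "'a::ab_group_add mat"
  assumes "M \<in> carrier_mat k l" and "N \<in> carrier_mat k l"
  shows "M - N + N = M" and "N + (M - N) = M"
  using assms by (auto intro: eq_matI)

lemma is_perm_mat_carrier: "is_perm_mat p P \<Longrightarrow> P \<in> carrier_mat p p"
  unfolding is_perm_mat_def perm_mat_def by auto

lemma resolvent_mat:
  fixes A :: "'a::field mat"
  assumes "A \<in> carrier_mat n n" and "det (s \<cdot>\<^sub>m 1\<^sub>m n - A) \<noteq> 0"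
  shows "minv (s \<cdot>\<^sub>m 1\<^sub>m n - A) \<in> carrier_mat n n"
    "minv (s \<cdot>\<^sub>m 1\<^sub>m n - A) * (s \<cdot>\<^sub>m 1\<^sub>m n - A) = 1\<^sub>m n"
    "(s \<cdot>\<^sub>m 1\<^sub>m n - A) * minv (s \<cdot>\<^sub>m 1\<^sub>m n - A) = 1\<^sub>m n"
  using minv_mat[OF minus_carrier_mat[OF assms(1)] assms(2)] by auto

lemma mult_resolvent:
  fixes A :: "'a::field mat"
  assumes A: "A \<in> carrier_mat n n" and det: "det (s \<cdot>\<^sub>m 1\<^sub>m n - A) \<noteq> 0"
    and Z: "Z \<in> carrier_mat n l"
  shows "A * (minv (s \<cdot>\<^sub>m 1\<^sub>m n - A) * Z) = s \<cdot>\<^sub>m (minv (s \<cdot>\<^sub>m 1\<^sub>m n - A) * Z) - Z"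
proof -
  let ?Y = "minv (s \<cdot>\<^sub>m 1\<^sub>m n - A) * Z"
  note R = resolvent_mat(1,3)[OF A det]
  have Y: "?Y \<in> carrier_mat n l" using R(1) Z by simp
  have sA: "s \<cdot>\<^sub>m 1\<^sub>m n - A \<in> carrier_mat n n" using A by (rule minus_carrier_mat)
  have "Z = (s \<cdot>\<^sub>m 1\<^sub>m n - A) * ?Y"
    using assoc_mult_mat[OF sA R(1) Z] R(2) Z by simp
  also have "\<dots> = s \<cdot>\<^sub>m ?Y - A * ?Y"
    using A Y by (simp add: minus_mult_distrib_mat[of _ n n] mult_smult_assoc_mat[of _ n n]
        left_mult_one_mat[OF Y])
  finally have "Z = s \<cdot>\<^sub>m ?Y - A * ?Y" .
  moreover have "A * ?Y = s \<cdot>\<^sub>m ?Y - (s \<cdot>\<^sub>m ?Y - A * ?Y)" using A Y by (intro eq_matI) auto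
  ultimately show ?thesis by simp
qed

lemma resolvent_sandwich:
  fixes A :: "'a::field mat"
  assumes A: "A \<in> carrier_mat n n" and det: "det (s \<cdot>\<^sub>m 1\<^sub>m n - A) \<noteq> 0"
    and X: "X \<in> carrier_mat k n" and Z: "Z \<in> carrier_mat n l"
  shows "X * A * minv (s \<cdot>\<^sub>m 1\<^sub>m n - A) * Z + X * Z = s \<cdot>\<^sub>m (X * (minv (s \<cdot>\<^sub>m 1\<^sub>m n - A) * Z))"
proof -
  let ?Y = "minv (s \<cdot>\<^sub>m 1\<^sub>m n - A) * Z"
  note R = resolvent_mat(1)[OF A det]
  have Y: "?Y \<in> carrier_mat n l" using R Z by simp
  have "X * A * minv (s \<cdot>\<^sub>m 1\<^sub>m n - A) * Z = X * (A * ?Y)"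
    using assoc_mult_mat[OF X A R] assoc_mult_mat[OF X mult_carrier_mat[OF A R] Z]
      assoc_mult_mat[OF A R Z] by simp
  also have "\<dots> = s \<cdot>\<^sub>m (X * ?Y) - X * Z"
    unfolding mult_resolvent[OF A det Z]
    using mult_minus_distrib_mat[OF X smult_carrier_mat[OF Y] Z] mult_smult_distrib[OF X Y] by simp
  finally have "X * A * minv (s \<cdot>\<^sub>m 1\<^sub>m n - A) * Z + X * Z = s \<cdot>\<^sub>m (X * ?Y) - X * Z + X * Z"
    by simp
  also have "\<dots> = s \<cdot>\<^sub>m (X * ?Y)"
    using smult_carrier_mat[OF mult_carrier_mat[OF X Y]] mult_carrier_mat[OF X Z]
    by (rule minus_add_cancel_mat(1))
  finally show ?thesis .
qed

lemma resolvent_feedback: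
  fixes F K G :: "'a::field mat"
  assumes F: "F \<in> carrier_mat n n" and K: "K \<in> carrier_mat n n" and G: "G \<in> carrier_mat n m"
    and KG: "K * G = G" and det: "det (s \<cdot>\<^sub>m 1\<^sub>m n - F) \<noteq> 0"
  shows "(s \<cdot>\<^sub>m 1\<^sub>m n - (F - K * F)) * (minv (s \<cdot>\<^sub>m 1\<^sub>m n - F) * G)
    = s \<cdot>\<^sub>m (K * (minv (s \<cdot>\<^sub>m 1\<^sub>m n - F) * G))"
proof -
  let ?R = "minv (s \<cdot>\<^sub>m 1\<^sub>m n - F)"
  let ?Y = "?R * G"
  note R = resolvent_mat(1,3)[OF F det]
  have sF: "s \<cdot>\<^sub>m 1\<^sub>m n - F \<in> carrier_mat n n" using F by (rule minus_carrier_mat)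
  have Y: "?Y \<in> carrier_mat n m" using R(1) G by simp
  have "s \<cdot>\<^sub>m 1\<^sub>m n - (F - K * F) = (s \<cdot>\<^sub>m 1\<^sub>m n - F) + K * F"
    using F K by (intro eq_matI) auto
  then have "(s \<cdot>\<^sub>m 1\<^sub>m n - (F - K * F)) * ?Y = (s \<cdot>\<^sub>m 1\<^sub>m n - F) * ?Y + K * (F * ?Y)"
    using add_mult_distrib_mat[OF sF _ Y] assoc_mult_mat[OF K F Y] F K by simp
  also have "(s \<cdot>\<^sub>m 1\<^sub>m n - F) * ?Y = G"
    using assoc_mult_mat[OF sF R(1) G] R(2) G by simp
  also have "K * (F * ?Y) = s \<cdot>\<^sub>m (K * ?Y) - G"
    unfolding mult_resolvent[OF F det G]
    using mult_minus_distrib_mat[OF K smult_carrier_mat[OF Y] G] mult_smult_distrib[OF K Y] KG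
    by simp
  also have "G + (s \<cdot>\<^sub>m (K * ?Y) - G) = s \<cdot>\<^sub>m (K * ?Y)"
    using smult_carrier_mat[OF mult_carrier_mat[OF K Y]] G by (rule minus_add_cancel_mat(2))
  finally show ?thesis .
qed

lemma resolvent_feedback_inverse:
  fixes F G H0 N :: "'a::field mat"
  defines "\<Gamma> \<equiv> F - G * N * H0 * F"
  assumes F: "F \<in> carrier_mat n n" and G: "G \<in> carrier_mat n m"
    and H0: "H0 \<in> carrier_mat m n" and N: "N \<in> carrier_mat m m" and NH0G: "N * (H0 * G) = 1\<^sub>m m"
    and s0: "s \<noteq> 0"
    and detF: "det (s \<cdot>\<^sub>m 1\<^sub>m n - F) \<noteq> 0" and det\<Gamma>: "det (s \<cdot>\<^sub>m 1\<^sub>m n - \<Gamma>) \<noteq> 0"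
  shows "minv (s \<cdot>\<^sub>m 1\<^sub>m n - \<Gamma>) * (G * N) * (H0 * (minv (s \<cdot>\<^sub>m 1\<^sub>m n - F) * G))
    = inverse s \<cdot>\<^sub>m (minv (s \<cdot>\<^sub>m 1\<^sub>m n - F) * G)"
proof -
  let ?S = "minv (s \<cdot>\<^sub>m 1\<^sub>m n - \<Gamma>)" and ?Y = "minv (s \<cdot>\<^sub>m 1\<^sub>m n - F) * G"
    and ?K = "G * N * H0"
  have GN: "G * N \<in> carrier_mat n m" using G N by simp
  have K: "?K \<in> carrier_mat n n" using G N H0 by simp
  have \<Gamma>: "\<Gamma> \<in> carrier_mat n n" unfolding \<Gamma>_def using mult_carrier_mat[OF K F] by (rule minus_carrier_mat)
  note S = resolvent_mat(1,2)[OF \<Gamma> det\<Gamma>]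
  have Y: "?Y \<in> carrier_mat n m" using resolvent_mat(1)[OF F detF] G by simp
  have KY: "?K * ?Y \<in> carrier_mat n m" using K Y by simp
  have KG: "?K * G = G"
    using assoc_mult_mat[OF GN H0 G] assoc_mult_mat[OF G N mult_carrier_mat[OF H0 G]] NH0G G
    by simp
  have "?S * (G * N) * (H0 * ?Y) = ?S * (?K * ?Y)"
    using assoc_mult_mat[OF S(1) GN mult_carrier_mat[OF H0 Y]] assoc_mult_mat[OF GN H0 Y] by simp
  also have "\<dots> = inverse s \<cdot>\<^sub>m (?S * ((s \<cdot>\<^sub>m 1\<^sub>m n - \<Gamma>) * ?Y))"
    unfolding resolvent_feedback[OF F K G KG detF, folded \<Gamma>_def]
    using mult_smult_distrib[OF S(1) KY] s0 by (simp add: smult_inverse_cancel_mat)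
  also have "?S * ((s \<cdot>\<^sub>m 1\<^sub>m n - \<Gamma>) * ?Y) = ?Y"
    using assoc_mult_mat[OF S(1) minus_carrier_mat[OF \<Gamma>, where A = "s \<cdot>\<^sub>m 1\<^sub>m n"] Y, symmetric]
      S(2) left_mult_one_mat[OF Y] by simp
  finally show ?thesis .
qed

lemma transfer_function_factorization:
  fixes F G H0 H1 N :: "'a::field mat"
  defines "\<Gamma> \<equiv> F - G * N * H0 * F"
  assumes F: "F \<in> carrier_mat n n" and G: "G \<in> carrier_mat n m"
    and H0: "H0 \<in> carrier_mat m n" and H1: "H1 \<in> carrier_mat k n"
    and N: "N \<in> carrier_mat m m" and NH0G: "N * (H0 * G) = 1\<^sub>m m"
    and s0: "s \<noteq> 0"
    and detF: "det (s \<cdot>\<^sub>m 1\<^sub>m n - F) \<noteq> 0" and det\<Gamma>: "det (s \<cdot>\<^sub>m 1\<^sub>m n - \<Gamma>) \<noteq> 0"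
  shows "(H0 @\<^sub>r H1) * (minv (s \<cdot>\<^sub>m 1\<^sub>m n - F) * G) = inverse s \<cdot>\<^sub>m
    ((1\<^sub>m m @\<^sub>r (H1 * \<Gamma> * minv (s \<cdot>\<^sub>m 1\<^sub>m n - \<Gamma>) * G * N + H1 * G * N))
     * (H0 * F * minv (s \<cdot>\<^sub>m 1\<^sub>m n - F) * G + H0 * G))"
proof -
  let ?R = "minv (s \<cdot>\<^sub>m 1\<^sub>m n - F)" and ?S = "minv (s \<cdot>\<^sub>m 1\<^sub>m n - \<Gamma>)"
  let ?Y = "?R * G" and ?W = "?S * (G * N)"
  let ?Z = "H0 * ?Y"
  have GN: "G * N \<in> carrier_mat n m" using G N by simp
  have \<Gamma>: "\<Gamma> \<in> carrier_mat n n"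
    unfolding \<Gamma>_def using mult_carrier_mat[OF mult_carrier_mat[OF GN H0] F] by (rule minus_carrier_mat)
  note S = resolvent_mat(1)[OF \<Gamma> det\<Gamma>]
  have Y: "?Y \<in> carrier_mat n m" using resolvent_mat(1)[OF F detF] G by simp
  have W: "?W \<in> carrier_mat n m" using S GN by simp
  have Z: "?Z \<in> carrier_mat m m" using H0 Y by simp
  have H1W: "H1 * ?W \<in> carrier_mat k m" using H1 W by simp
  have M: "H0 * F * ?R * G + H0 * G = s \<cdot>\<^sub>m ?Z"
    by (rule resolvent_sandwich[OF F detF H0 G])
  have T: "H1 * \<Gamma> * ?S * G * N + H1 * G * N = s \<cdot>\<^sub>m (H1 * ?W)"
    using resolvent_sandwich[OF \<Gamma> det\<Gamma> H1 GN]
      assoc_mult_mat[OF mult_carrier_mat[OF mult_carrier_mat[OF H1 \<Gamma>] S] G N]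
      assoc_mult_mat[OF H1 G N] by simp
  have "(H1 * ?W) * ?Z = inverse s \<cdot>\<^sub>m (H1 * ?Y)"
    using assoc_mult_mat[OF H1 W Z] mult_smult_distrib[OF H1 Y]
      resolvent_feedback_inverse[OF F G H0 N NH0G s0 detF det\<Gamma>[unfolded \<Gamma>_def]]
    unfolding \<Gamma>_def by simp
  then have "(s \<cdot>\<^sub>m (H1 * ?W)) * (s \<cdot>\<^sub>m ?Z) = s \<cdot>\<^sub>m (H1 * ?Y)"
    using mult_smult_assoc_mat[OF H1W smult_carrier_mat[OF Z]] mult_smult_distrib[OF H1W Z] s0
    by (simp add: smult_inverse_cancel_mat)
  then have "(1\<^sub>m m @\<^sub>r s \<cdot>\<^sub>m (H1 * ?W)) * (s \<cdot>\<^sub>m ?Z) = s \<cdot>\<^sub>m ?Z @\<^sub>r s \<cdot>\<^sub>m (H1 * ?Y)"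
    using append_rows_mult[OF one_carrier_mat smult_carrier_mat[OF H1W] smult_carrier_mat[OF Z]]
      left_mult_one_mat[OF smult_carrier_mat[OF Z]] by simp
  then have "inverse s \<cdot>\<^sub>m ((1\<^sub>m m @\<^sub>r s \<cdot>\<^sub>m (H1 * ?W)) * (s \<cdot>\<^sub>m ?Z))
      = inverse s \<cdot>\<^sub>m (s \<cdot>\<^sub>m ?Z) @\<^sub>r inverse s \<cdot>\<^sub>m (s \<cdot>\<^sub>m (H1 * ?Y))"
    using smult_append_rows[OF smult_carrier_mat[OF Z] smult_carrier_mat[OF mult_carrier_mat[OF H1 Y]]]
    by simp
  also have "\<dots> = (H0 @\<^sub>r H1) * ?Y"
    unfolding smult_inverse_cancel_mat(1)[OF s0] by (rule append_rows_mult[OF H0 H1 Y, symmetric])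
  finally show ?thesis unfolding M T by (rule sym)
qed

lemma cmat_mult:
  "A \<in> carrier_mat k n \<Longrightarrow> B \<in> carrier_mat n l \<Longrightarrow> cmat (A * B) = cmat A * cmat B"
  by (rule of_real_hom.mat_hom_mult)

lemma cmat_left_inverse:
  assumes "A \<in> carrier_mat k n" and "B \<in> carrier_mat n k" and "A * B = 1\<^sub>m k"
  shows "cmat A * cmat B = 1\<^sub>m k"
  using cmat_mult[OF assms(1,2), symmetric] assms(3) of_real_hom.mat_hom_one by simp

lemma cmat_minus:
  "A \<in> carrier_mat k l \<Longrightarrow> B \<in> carrier_mat k l \<Longrightarrow> cmat (A - B) = cmat A - cmat B"
  by (auto intro: eq_matI)

theorem theorem1:
  fixes n m p :: nat and F G H Pi H0 H1 :: "real mat" and s :: complex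
  assumes dims: "F \<in> carrier_mat n n" "G \<in> carrier_mat n m" "H \<in> carrier_mat p n"
    and mp: "m \<le> p" and mn: "m \<le> n"
    and reach: "reachable n m F G"
    and obs: "observable n p F H"
    and stab: "hurwitz F"
    and rankG: "mrank n G = m"
    and rankHG: "mrank p (H * G) = m"
    and Pi: "is_perm_mat p Pi"
    and H0: "H0 \<in> carrier_mat m n" and H1: "H1 \<in> carrier_mat (p - m) n"
    and split: "Pi * H = H0 @\<^sub>r H1"
    and inv: "invertible_mat (H0 * G)"
    and s0: "s \<noteq> 0"
    and sF: "det (s \<cdot>\<^sub>m 1\<^sub>m n - cmat F) \<noteq> 0"
    and sGam: "det (s \<cdot>\<^sub>m 1\<^sub>m n - cmat (F - G * minv (H0 * G) * H0 * F)) \<noteq> 0"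
  shows "let Gam = F - G * minv (H0 * G) * H0 * F;
             V = cmat H * minv (s \<cdot>\<^sub>m 1\<^sub>m n - cmat F) * cmat G;
             T = cmat H1 * cmat Gam * minv (s \<cdot>\<^sub>m 1\<^sub>m n - cmat Gam) * cmat G * cmat (minv (H0 * G))
                 + cmat H1 * cmat G * cmat (minv (H0 * G));
             M = cmat H0 * cmat F * minv (s \<cdot>\<^sub>m 1\<^sub>m n - cmat F) * cmat G + cmat (H0 * G)
         in cmat Pi * V = (inverse s) \<cdot>\<^sub>m (((1\<^sub>m m) @\<^sub>r T) * M)"
proof -
  note F = dims(1) and G = dims(2) and H = dims(3)
  have Pi_carrier: "Pi \<in> carrier_mat p p" using Pi by (rule is_perm_mat_carrier)
  have H0G: "H0 * G \<in> carrier_mat m m" using H0 G by simp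
  note N = minv_mat(1,2)[OF H0G invertible_mat_det_nonzero[OF H0G inv]]
  have GNH0: "G * minv (H0 * G) * H0 \<in> carrier_mat n n" using G N(1) H0 by simp
  have cmat_N: "cmat (minv (H0 * G)) * (cmat H0 * cmat G) = 1\<^sub>m m"
    using cmat_left_inverse[OF N(1) H0G N(2)] unfolding cmat_mult[OF H0 G] .
  have cmat_\<Gamma>: "cmat (F - G * minv (H0 * G) * H0 * F)
      = cmat F - cmat G * cmat (minv (H0 * G)) * cmat H0 * cmat F"
    using cmat_minus[OF F mult_carrier_mat[OF GNH0 F]]
      cmat_mult[OF GNH0 F] cmat_mult[OF mult_carrier_mat[OF G N(1)] H0]
      cmat_mult[OF G N(1)] by simp
  have cF: "cmat F \<in> carrier_mat n n" and cG: "cmat G \<in> carrier_mat n m"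
    and cH: "cmat H \<in> carrier_mat p n" and cH0: "cmat H0 \<in> carrier_mat m n"
    and cH1: "cmat H1 \<in> carrier_mat (p - m) n" and cN: "cmat (minv (H0 * G)) \<in> carrier_mat m m"
    and cPi: "cmat Pi \<in> carrier_mat p p"
    using F G H H0 H1 N(1) Pi_carrier by simp_all
  let ?R = "minv (s \<cdot>\<^sub>m 1\<^sub>m n - cmat F)"
  have R: "?R \<in> carrier_mat n n" by (rule resolvent_mat(1)[OF cF sF])
  have "cmat Pi * (cmat H * ?R * cmat G) = (cmat Pi * cmat H) * (?R * cmat G)"
    using assoc_mult_mat[OF cH R cG] assoc_mult_mat[OF cPi cH mult_carrier_mat[OF R cG]] by simp
  also have "cmat Pi * cmat H = cmat H0 @\<^sub>r cmat H1"
    unfolding cmat_mult[OF Pi_carrier H, symmetric] split by (rule map_mat_append_rows[OF H0 H1])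
  finally have V: "cmat Pi * (cmat H * ?R * cmat G) = (cmat H0 @\<^sub>r cmat H1) * (?R * cmat G)" .
  show ?thesis
    unfolding Let_def cmat_\<Gamma> cmat_mult[OF H0 G] V
    by (rule transfer_function_factorization[OF cF cG cH0 cH1 cN cmat_N s0 sF sGam[unfolded cmat_\<Gamma>]])
qed

end
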